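(* Let $\phi(p_1,\dots,p_n)$ be a consistent formula of $\mathbf{PT}$ whose propositional variables are among $p_1,\dots,p_n$. The following are equivalent: (i) $\phi$ is flat; (ii) $\phi\equiv\Theta_X$ for some nonempty team $X$ on $\{p_1,\dots,p_n\}$; (iii) $\phi\equiv\neg\neg\phi$; (iv) $\models\phi\otimes\neg\phi$.
   Context: A valuation is a function $v$ from the set Prop of propositional variables to $\{0,1\}$; a team is a set of valuations. Formulas of $\mathbf{PT}$: $\phi::=p\mid\bot\mid\top\mid\,=\!(\phi_1,\dots,\phi_n,\phi)\mid\neg\phi\mid\phi\wedge\phi\mid\phi\otimes\phi\mid\phi\vee\phi\mid\phi\to\phi$. Satisfaction on a team $X$: $X\models p$ iff $v(p)=1$ for all $v\in X$; $X\models\bot$ iff $X=\emptyset$; $X\models\top$ always; $\wedge$ conjunction; $X\models\phi\otimes\psi$ iff $X=Y\cup Z$ with $Y\models\phi$, $Z\models\psi$; $X\models\phi\vee\psi$ iff $X\models\phi$ or $X\models\psi$; $X\models\phi\to\psi$ iff every $Y\subseteq X$ with $Y\models\phi$ satisfies $\psi$; $X\models\neg\phi$ iff $\{v\}\not\models\phi$ for all $v\in X$; $X\models\,=\!(\phi_1,\dots,\phi_n,\psi)$ iff $X\models\bigwedge_i(\phi_i\vee(\phi_i\to\bot))\to(\psi\vee(\psi\to\bot))$. $\models\phi$: all teams satisfy $\phi$; $\phi\equiv\psi$: same teams satisfy both; $\phi$ is consistent if some nonempty team satisfies $\phi$. $\phi$ is flat if for all teams $X$: $X\models\phi$ iff $\{v\}\models\phi$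 for all $v\in X$. A team on $V=\{p_1,\dots,p_n\}$ is a set of functions $V\to\{0,1\}$; a valuation $w$ satisfies formulas in variables from $V$ according to its restriction to $V$. For a nonempty team $X$ on $V$, $\Theta_X:=\neg\neg\bigvee_{v\in X}(p_1^{v(p_1)}\wedge\dots\wedge p_n^{v(p_n)})$, where $p^1:=p$, $p^0:=\neg p$. *)

theory Defs
  imports Main
begin

type_synonym pvar = nat
type_synonym valuation = "pvar \<Rightarrow> bool"
type_synonym team = "valuation set"

datatype fm =
    PVar pvar
  | Bot
  | Top
  | Dep "fm list" fm
  | Neg fm
  | Conj fm fm
  | Tensor fm fm
  | Or fm fm                  (* intuitionistic disjunction *)
  | Imp fm fm

fun vars :: "fm \<Rightarrow> pvar set" where
  "vars (PVar p) = {p}"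
| "vars Bot = {}"
| "vars Top = {}"
| "vars (Dep fs f) = (\<Union>g\<in>set fs. vars g) \<union> vars f"
| "vars (Neg f) = vars f"
| "vars (Conj f g) = vars f \<union> vars g"
| "vars (Tensor f g) = vars f \<union> vars g"
| "vars (Or f g) = vars f \<union> vars g"
| "vars (Imp f g) = vars f \<union> vars g"

text \<open>Team semantics. The dependence atom is given by unfolding its defining
formula  (/\_i (phi_i \/ (phi_i -> bot))) -> (psi \/ (psi -> bot)).\<close>
fun sat :: "team \<Rightarrow> fm \<Rightarrow> bool" where
  "sat X (PVar p) = (\<forall>v\<in>X. v p)"
| "sat X Bot = (X = {})"
| "sat X Top = True"
| "sat X (Dep fs f) =
     (\<forall>Y. Y \<subseteq> X \<longrightarrow>
        (\<forall>g\<in>set fs. sat Y g \<or> (\<forall>Z. Z \<subseteq> Y \<longrightarrow> sat Z g \<longrightarrow> Z = {})) \<longrightarrow>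
        (sat Y f \<or> (\<forall>Z. Z \<subseteq> Y \<longrightarrow> sat Z f \<longrightarrow> Z = {})))"
| "sat X (Neg f) = (\<forall>v\<in>X. \<not> sat {v} f)"
| "sat X (Conj f g) = (sat X f \<and> sat X g)"
| "sat X (Tensor f g) = (\<exists>Y Z. X = Y \<union> Z \<and> sat Y f \<and> sat Z g)"
| "sat X (Or f g) = (sat X f \<or> sat X g)"
| "sat X (Imp f g) = (\<forall>Y. Y \<subseteq> X \<longrightarrow> sat Y f \<longrightarrow> sat Y g)"

definition valid :: "fm \<Rightarrow> bool" where
  "valid f \<longleftrightarrow> (\<forall>X. sat X f)"

definition fm_equiv :: "fm \<Rightarrow> fm \<Rightarrow> bool" where
  "fm_equiv f g \<longleftrightarrow> (\<forall>X. sat X f \<longleftrightarrow> sat X g)"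

definition consistent :: "fm \<Rightarrow> bool" where
  "consistent f \<longleftrightarrow> (\<exists>X. X \<noteq> {} \<and> sat X f)"

definition flat :: "fm \<Rightarrow> bool" where
  "flat f \<longleftrightarrow> (\<forall>X. sat X f \<longleftrightarrow> (\<forall>v\<in>X. sat {v} f))"

text \<open>A team on a finite set V of variables: functions V -> {0,1}, represented
as valuations that are constantly False outside V.\<close>
definition team_on :: "pvar set \<Rightarrow> team \<Rightarrow> bool" where
  "team_on V X \<longleftrightarrow> (\<forall>v\<in>X. \<forall>p. p \<notin> V \<longrightarrow> \<not> v p)"

fun Conjs :: "fm list \<Rightarrow> fm" where
  "Conjs [] = Top"
| "Conjs [f] = f"
| "Conjs (f # fs) = Conj f (Conjs fs)"

fun Disjs :: "fm list \<Rightarrow> fm" where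
  "Disjs [] = Bot"
| "Disjs [f] = f"
| "Disjs (f # fs) = Or f (Disjs fs)"

definition lit :: "pvar \<Rightarrow> bool \<Rightarrow> fm" where
  "lit p b = (if b then PVar p else Neg (PVar p))"

definition char_conj :: "pvar set \<Rightarrow> valuation \<Rightarrow> fm" where
  "char_conj V v = Conjs (map (\<lambda>p. lit p (v p)) (sorted_list_of_set V))"

text \<open>Theta_X = not not \/_{v in X} char_conj V v; the enumeration order of the
finite team X is irrelevant semantically.\<close>
definition Theta :: "pvar set \<Rightarrow> team \<Rightarrow> fm" where
  "Theta V X = Neg (Neg (Disjs (map (char_conj V) (SOME xs. set xs = X))))"

end

theory Submission
  imports Defs
begin

text \<open>Every formula of PT is downward closed, and its truth on a singleton team
depends only on the valuation of its variables. Flatness then says that \<phi> is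
determined by the set of valuations (restricted to V) that satisfy it; this set is
a nonempty team X on V by consistency, and Theta X holds on exactly the teams
all of whose members agree on V with some member of X. Both \<not>\<not>\<phi> and
\<phi> \<otimes> \<not>\<phi> express flatness directly: the former holds on X iff \<phi> holds
on each singleton of X, and the latter splits any team into the valuations
satisfying \<phi> and those that do not.\<close>

lemma sat_empty: "sat {} f"
  by (induction f) auto

lemma sat_downward_closed: "sat X f \<Longrightarrow> Y \<subseteq> X \<Longrightarrow> sat Y f"
proof (induction f arbitrary: X Y)
  case (Tensor f g)
  then obtain A B where "X = A \<union> B" "sat A f" "sat B g" by auto
  then have "Y = (Y \<inter> A) \<union> (Y \<inter> B)" "sat (Y \<inter> A) f" "sat (Y \<inter> B) g"
    using Tensor by auto
  then show ?case by auto
qed auto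

lemma sat_singleton_if_sat: "sat X f \<Longrightarrow> v \<in> X \<Longrightarrow> sat {v} f"
  using sat_downward_closed by blast

lemma sat_singleton_Imp: "sat {v} (Imp f g) \<longleftrightarrow> (sat {v} f \<longrightarrow> sat {v} g)"
  by (auto simp: subset_singleton_iff sat_empty)

lemma sat_singleton_Dep: "sat {v} (Dep fs f)"
  by (auto simp: subset_singleton_iff sat_empty)

lemma sat_singleton_Tensor: "sat {v} (Tensor f g) \<longleftrightarrow> sat {v} f \<or> sat {v} g"
proof
  assume "sat {v} (Tensor f g)"
  then obtain A B where AB: "{v} = A \<union> B" "sat A f" "sat B g" by auto
  then have "A = {v} \<or> B = {v}" using Un_singleton_iff by metis
  then show "sat {v} f \<or> sat {v} g" using AB by auto
next
  assume "sat {v} f \<or> sat {v} g"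
  then show "sat {v} (Tensor f g)"
    by (metis sat.simps(7) sat_empty Un_empty_left Un_empty_right)
qed

lemma sat_singleton_cong:
  "(\<And>p. p \<in> vars f \<Longrightarrow> v p = w p) \<Longrightarrow> sat {v} f \<longleftrightarrow> sat {w} f"
proof (induction f)
  case (Dep fs f)
  show ?case by (simp only: sat_singleton_Dep)
next
  case (Imp f g)
  then have "sat {v} f \<longleftrightarrow> sat {w} f" "sat {v} g \<longleftrightarrow> sat {w} g" by auto
  then show ?case by (simp only: sat_singleton_Imp)
next
  case (Tensor f g)
  then have "sat {v} f \<longleftrightarrow> sat {w} f" "sat {v} g \<longleftrightarrow> sat {w} g" by auto
  then show ?case by (simp only: sat_singleton_Tensor)
qed auto

lemma sat_singleton_Conjs: "sat {v} (Conjs fs) \<longleftrightarrow> (\<forall>f\<in>set fs. sat {v} f)"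
  by (induction fs rule: Conjs.induct) auto

lemma sat_singleton_Disjs: "sat {v} (Disjs fs) \<longleftrightarrow> (\<exists>f\<in>set fs. sat {v} f)"
  by (induction fs rule: Disjs.induct) auto

lemma sat_singleton_lit: "sat {v} (lit p b) \<longleftrightarrow> v p = b"
  by (auto simp: lit_def)

lemma sat_singleton_char_conj:
  "finite V \<Longrightarrow> sat {v} (char_conj V u) \<longleftrightarrow> (\<forall>p\<in>V. v p = u p)"
  by (auto simp: char_conj_def sat_singleton_Conjs sat_singleton_lit)

lemma finite_team_on:
  assumes "finite V" "team_on V X"
  shows "finite X"
proof -
  have "X \<subseteq> (\<lambda>S p. p \<in> S) ` Pow V"
  proof
    fix v assume "v \<in> X"
    then have "{p. v p} \<subseteq> V" using assms(2) by (auto simp: team_on_def)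
    moreover have "v = (\<lambda>p. p \<in> {p. v p})" by auto
    ultimately show "v \<in> (\<lambda>S p. p \<in> S) ` Pow V" by blast
  qed
  then show ?thesis using assms(1) finite_subset by blast
qed

lemma sat_Theta:
  assumes "finite V" "finite X"
  shows "sat Y (Theta V X) \<longleftrightarrow> (\<forall>v\<in>Y. \<exists>u\<in>X. \<forall>p\<in>V. v p = u p)"
proof -
  have "set (SOME xs. set xs = X) = X"
    using finite_list[OF assms(2)] by (rule someI_ex)
  then show ?thesis
    by (auto simp: Theta_def sat_singleton_Disjs sat_singleton_char_conj[OF assms(1)])
qed

lemma flat_Theta:
  assumes "finite V" "team_on V X"
  shows "flat (Theta V X)"
  using sat_Theta[OF assms(1) finite_team_on[OF assms]] by (auto simp: flat_def)

text \<open>flat_def loops when used as a rewrite rule next to a flatness assumption.\<close>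
lemma flatD: "flat f \<Longrightarrow> sat X f \<longleftrightarrow> (\<forall>v\<in>X. sat {v} f)"
  unfolding flat_def by (erule allE)

lemma flat_cong: "fm_equiv f g \<Longrightarrow> flat f \<longleftrightarrow> flat g"
  by (simp add: flat_def fm_equiv_def)

definition restrict_valuation :: "pvar set \<Rightarrow> valuation \<Rightarrow> valuation" where
  "restrict_valuation V v = (\<lambda>p. p \<in> V \<and> v p)"

text \<open>The team on V that a flat formula is equivalent to.\<close>
definition singleton_models :: "pvar set \<Rightarrow> fm \<Rightarrow> team" where
  "singleton_models V f = restrict_valuation V ` {v. sat {v} f}"

lemma team_on_singleton_models: "team_on V (singleton_models V f)"
  by (auto simp: team_on_def singleton_models_def restrict_valuation_def)

lemma singleton_models_nonempty:
  assumes "consistent f"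
  shows "singleton_models V f \<noteq> {}"
proof -
  obtain X v where "sat X f" "v \<in> X"
    using assms by (auto simp: consistent_def)
  then have "sat {v} f" by (rule sat_singleton_if_sat)
  then show ?thesis by (auto simp: singleton_models_def)
qed

lemma sat_singleton_iff_singleton_models:
  assumes "vars f \<subseteq> V"
  shows "sat {v} f \<longleftrightarrow> (\<exists>u\<in>singleton_models V f. \<forall>p\<in>V. v p = u p)"
proof
  assume "sat {v} f"
  then show "\<exists>u\<in>singleton_models V f. \<forall>p\<in>V. v p = u p"
    by (auto simp: singleton_models_def restrict_valuation_def)
next
  assume "\<exists>u\<in>singleton_models V f. \<forall>p\<in>V. v p = u p"
  then obtain w where "sat {w} f" "\<forall>p\<in>V. v p = restrict_valuation V w p"
    by (auto simp: singleton_models_def)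
  moreover from this(2) assms have "p \<in> vars f \<Longrightarrow> v p = w p" for p
    by (auto simp: restrict_valuation_def)
  ultimately show "sat {v} f"
    using sat_singleton_cong[of f v w] by blast
qed

lemma flat_equiv_Theta_singleton_models:
  assumes "finite V" "vars f \<subseteq> V" "flat f"
  shows "fm_equiv f (Theta V (singleton_models V f))"
  unfolding fm_equiv_def
proof
  fix Y
  have "sat Y f \<longleftrightarrow> (\<forall>v\<in>Y. sat {v} f)"
    using assms(3) by (rule flatD)
  also have "\<dots> \<longleftrightarrow> (\<forall>v\<in>Y. \<exists>u\<in>singleton_models V f. \<forall>p\<in>V. v p = u p)"
    by (simp only: sat_singleton_iff_singleton_models[OF assms(2)])
  also have "\<dots> \<longleftrightarrow> sat Y (Theta V (singleton_models V f))"
    by (rule sat_Theta[OF assms(1) finite_team_on[OF assms(1) team_on_singleton_models], symmetric])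
  finally show "sat Y f \<longleftrightarrow> sat Y (Theta V (singleton_models V f))" .
qed

lemma flat_iff_equiv_Theta:
  assumes "finite V" "vars f \<subseteq> V" "consistent f"
  shows "flat f \<longleftrightarrow> (\<exists>X. X \<noteq> {} \<and> team_on V X \<and> fm_equiv f (Theta V X))"
proof
  assume "flat f"
  then show "\<exists>X. X \<noteq> {} \<and> team_on V X \<and> fm_equiv f (Theta V X)"
    by (intro exI[of _ "singleton_models V f"] conjI singleton_models_nonempty[OF assms(3)]
        team_on_singleton_models flat_equiv_Theta_singleton_models[OF assms(1,2)])
next
  assume "\<exists>X. X \<noteq> {} \<and> team_on V X \<and> fm_equiv f (Theta V X)"
  then obtain X where "team_on V X" "fm_equiv f (Theta V X)" by blast
  then show "flat f" by (simp add: flat_cong flat_Theta[OF assms(1)])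
qed

lemma flat_iff_equiv_Neg_Neg: "flat f \<longleftrightarrow> fm_equiv f (Neg (Neg f))"
  unfolding flat_def fm_equiv_def by simp

lemma flat_iff_valid_Tensor_Neg: "flat f \<longleftrightarrow> valid (Tensor f (Neg f))"
proof
  assume flat: "flat f"
  show "valid (Tensor f (Neg f))"
    unfolding valid_def
  proof
    fix X
    have "X = {v\<in>X. sat {v} f} \<union> {v\<in>X. \<not> sat {v} f}" by auto
    moreover have "sat {v\<in>X. sat {v} f} f"
      using flatD[OF flat] by blast
    moreover have "sat {v\<in>X. \<not> sat {v} f} (Neg f)" by auto
    ultimately show "sat X (Tensor f (Neg f))" unfolding sat.simps(7) by (intro exI conjI)
  qed
next
  assume valid: "valid (Tensor f (Neg f))"
  have "sat X f" if singletons: "\<forall>v\<in>X. sat {v} f" for X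
  proof -
    have "sat X (Tensor f (Neg f))"
      using valid by (simp only: valid_def)
    then obtain Y Z where "X = Y \<union> Z" "sat Y f" "sat Z (Neg f)"
      unfolding sat.simps(7) by blast
    moreover from singletons \<open>X = Y \<union> Z\<close> \<open>sat Z (Neg f)\<close> have "Z = {}" by auto
    ultimately show "sat X f" by simp
  qed
  then show "flat f"
    unfolding flat_def using sat_singleton_if_sat by blast
qed

theorem lemma4p1:
  fixes \<phi> :: fm and V :: "pvar set"
  assumes "finite V" and "vars \<phi> \<subseteq> V" and "consistent \<phi>"
  shows "(flat \<phi> \<longleftrightarrow> (\<exists>X. X \<noteq> {} \<and> team_on V X \<and> fm_equiv \<phi> (Theta V X)))
       \<and> ((\<exists>X. X \<noteq> {} \<and> team_on V X \<and> fm_equiv \<phi> (Theta V X)) \<longleftrightarrow> fm_equiv \<phi> (Neg (Neg \<phi>)))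
       \<and> (fm_equiv \<phi> (Neg (Neg \<phi>)) \<longleftrightarrow> valid (Tensor \<phi> (Neg \<phi>)))"
  using flat_iff_equiv_Theta[OF assms] flat_iff_equiv_Neg_Neg[of \<phi>]
    flat_iff_valid_Tensor_Neg[of \<phi>]
  by blast

end
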